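(* For every graph $\mathcal{G}=(\mathcal{V},\mathcal{E})$ with $|\mathcal{V}|\ge4$ and no isolated vertices, the graph device $D(\mathcal{G})$ is minimal.
   Context: An abstract storage device (ASD) is a pair $D=(\mathcal{S}_D,\mathcal{P}_D)$, $\mathcal{S}_D$ a finite set and $\mathcal{P}_D$ a finite family of partitions of $\mathcal{S}_D$. For a partition $\pi$ of $\mathcal{S}'$ and $\phi:\mathcal{S}\to\mathcal{S}'$, $\pi\circ\phi$ is the partition of $\mathcal{S}$ with $x,y$ in the same block iff $\phi(x),\phi(y)$ are in the same block of $\pi$; $\pi\preceq\rho$ means every block of $\pi$ lies in a block of $\rho$. $D\le D'$ means there exist $\phi:\mathcal{S}_D\to\mathcal{S}_{D'}$, $\alpha:\mathcal{P}_D\to\mathcal{P}_{D'}$ with $\alpha(\pi)\circ\phi\preceq\pi$ for all $\pi\in\mathcal{P}_D$; $D\equiv D'$ means $D\le D'$ and $D'\le D$. $D$ is minimal if no $E\equiv D$ has $|\mathcal{S}_E|<|\mathcal{S}_D|$ and no $E\equiv D$ has $|\mathcal{P}_E|<|\mathcal{P}_D|$. For a finite undirected graph $\mathcal{G}=(\mathcal{V},\mathcal{E})$, the graph device $D(\mathcal{G})$ has state space $\mathcal{V}$ and partition set $\{\pi_e:e\in\mathcal{E}\}$, where for $e=\{u,v\}$, $\pi_e=\{\{u\},\{v\},\mathcal{V}\setminus\{u,v\}\}$. A vertex is isolated if it lies in no edge. *)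

theory Defs
  imports Main "HOL-Library.Disjoint_Sets"
begin

text \<open>An abstract storage device: a pair (state set, family of partitions of the state set).
  A partition is a set of blocks (library notion partition_on).\<close>

type_synonym 'a asd = "'a set \<times> 'a set set set"

definition states :: "'a asd \<Rightarrow> 'a set" where
  "states D = fst D"

definition parts :: "'a asd \<Rightarrow> 'a set set set" where
  "parts D = snd D"

definition is_asd :: "'a asd \<Rightarrow> bool" where
  "is_asd D \<longleftrightarrow> finite (states D) \<and> finite (parts D) \<and>
     (\<forall>\<pi>\<in>parts D. partition_on (states D) \<pi>)"

definition pullback :: "'b set set \<Rightarrow> ('a \<Rightarrow> 'b) \<Rightarrow> 'a set \<Rightarrow> 'a set set" where
  "pullback \<pi> \<phi> S = (\<lambda>x. {y \<in> S. \<exists>B\<in>\<pi>. \<phi> x \<in> B \<and> \<phi> y \<in> B}) ` S"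

definition refines :: "'a set set \<Rightarrow> 'a set set \<Rightarrow> bool" where
  "refines \<pi> \<rho> \<longleftrightarrow> (\<forall>B\<in>\<pi>. \<exists>C\<in>\<rho>. B \<subseteq> C)"

definition asd_le :: "'a asd \<Rightarrow> 'b asd \<Rightarrow> bool" where
  "asd_le D D' \<longleftrightarrow> (\<exists>(\<phi>::'a \<Rightarrow> 'b) (\<alpha>::'a set set \<Rightarrow> 'b set set).
     (\<forall>x\<in>states D. \<phi> x \<in> states D') \<and>
     (\<forall>\<pi>\<in>parts D. \<alpha> \<pi> \<in> parts D') \<and>
     (\<forall>\<pi>\<in>parts D. refines (pullback (\<alpha> \<pi>) \<phi> (states D)) \<pi>))"

definition asd_equiv :: "'a asd \<Rightarrow> 'b asd \<Rightarrow> bool" where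
  "asd_equiv D D' \<longleftrightarrow> asd_le D D' \<and> asd_le D' D"

text \<open>Minimality. The competing devices E range over ASDs with states of type 'b;
  the main theorem leaves 'b free, i.e. quantifies over all state types.\<close>

definition minimal :: "'b itself \<Rightarrow> 'a asd \<Rightarrow> bool" where
  "minimal _ D \<longleftrightarrow> is_asd D \<and>
     (\<forall>E::'b asd. is_asd E \<and> asd_equiv E D \<longrightarrow>
        card (states D) \<le> card (states E) \<and> card (parts D) \<le> card (parts E))"

definition is_graph :: "'a set \<Rightarrow> 'a set set \<Rightarrow> bool" where
  "is_graph V Ed \<longleftrightarrow> finite V \<and> (\<forall>e\<in>Ed. e \<subseteq> V \<and> card e = 2)"

definition edge_partition :: "'a set \<Rightarrow> 'a set \<Rightarrow> 'a set set" where
  "edge_partition V e = (\<lambda>x. {x}) ` e \<union> {V - e}"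

definition graph_device :: "'a set \<Rightarrow> 'a set set \<Rightarrow> 'a asd" where
  "graph_device V Ed = (V, edge_partition V ` Ed)"

definition no_isolated :: "'a set \<Rightarrow> 'a set set \<Rightarrow> bool" where
  "no_isolated V Ed \<longleftrightarrow> (\<forall>v\<in>V. \<exists>e\<in>Ed. v \<in> e)"

end

theory Submission
  imports Defs
begin

text \<open>Let \<open>D(G) \<le> E\<close> via \<open>(\<psi>, \<beta>)\<close> and \<open>E \<le> D(G)\<close> via \<open>(\<phi>, \<alpha>)\<close>.
  Every vertex lies on an edge whose partition separates it from all other vertices, so \<open>\<psi>\<close>
  must be injective. Composing the two reductions gives a self-reduction of \<open>D(G)\<close>; if \<open>\<beta>\<close>
  identified the partitions of two edges \<open>e \<noteq> f\<close>, a single edge partition \<open>\<pi>\<^sub>g\<close> pulled back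
  along \<open>\<phi> \<circ> \<psi>\<close> would refine both \<open>\<pi>\<^sub>e\<close> and \<open>\<pi>\<^sub>f\<close>. Then the images of the two ends of \<open>e\<close>,
  a vertex of \<open>f - e\<close> and any fourth vertex lie in pairwise different blocks of \<open>\<pi>\<^sub>g\<close>,
  which has only three blocks. Hence \<open>\<beta>\<close> is injective as well.\<close>

definition same_block :: "'a set set \<Rightarrow> 'a \<Rightarrow> 'a \<Rightarrow> bool" where
  "same_block \<pi> x y \<longleftrightarrow> (\<exists>B\<in>\<pi>. x \<in> B \<and> y \<in> B)"

lemma same_block_if_same_block_pullback:
  assumes "refines (pullback \<rho> \<psi> S) \<pi>" "x \<in> S" "y \<in> S" "same_block \<rho> (\<psi> x) (\<psi> y)"
  shows "same_block \<pi> x y"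
proof -
  let ?Bx = "{z \<in> S. \<exists>B\<in>\<rho>. \<psi> x \<in> B \<and> \<psi> z \<in> B}"
  have "?Bx \<in> pullback \<rho> \<psi> S"
    using assms(2) unfolding pullback_def by blast
  then obtain C where "C \<in> \<pi>" "?Bx \<subseteq> C"
    using assms(1) unfolding refines_def by blast
  moreover have "x \<in> ?Bx" "y \<in> ?Bx"
    using assms(2-4) unfolding same_block_def by auto
  ultimately show ?thesis
    unfolding same_block_def by blast
qed

lemma refines_pullback_comp:
  assumes "refines (pullback \<sigma> \<phi> T) \<rho>" "refines (pullback \<rho> \<psi> S) \<pi>" "\<psi> ` S \<subseteq> T"
  shows "refines (pullback \<sigma> (\<phi> \<circ> \<psi>) S) \<pi>"
  unfolding refines_def
proof
  fix B assume "B \<in> pullback \<sigma> (\<phi> \<circ> \<psi>) S"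
  then obtain x where x: "x \<in> S" and B: "B = {y \<in> S. same_block \<sigma> (\<phi> (\<psi> x)) (\<phi> (\<psi> y))}"
    unfolding pullback_def same_block_def by auto
  let ?Bx = "{y \<in> S. same_block \<rho> (\<psi> x) (\<psi> y)}"
  have "?Bx \<in> pullback \<rho> \<psi> S"
    using x unfolding pullback_def same_block_def by blast
  then obtain C where "C \<in> \<pi>" "?Bx \<subseteq> C"
    using assms(2) unfolding refines_def by blast
  moreover have "B \<subseteq> ?Bx"
    using same_block_if_same_block_pullback[OF assms(1)] x assms(3) unfolding B by blast
  ultimately show "\<exists>C\<in>\<pi>. B \<subseteq> C" by blast
qed

definition reduction :: "'a asd \<Rightarrow> 'b asd \<Rightarrow> ('a \<Rightarrow> 'b) \<Rightarrow> ('a set set \<Rightarrow> 'b set set) \<Rightarrow> bool" where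
  "reduction D D' \<phi> \<alpha> \<longleftrightarrow>
     \<phi> ` states D \<subseteq> states D' \<and> \<alpha> ` parts D \<subseteq> parts D' \<and>
     (\<forall>\<pi>\<in>parts D. refines (pullback (\<alpha> \<pi>) \<phi> (states D)) \<pi>)"

lemma asd_le_iff_reduction: "asd_le D D' \<longleftrightarrow> (\<exists>\<phi> \<alpha>. reduction D D' \<phi> \<alpha>)"
  unfolding asd_le_def reduction_def by (simp add: image_subset_iff)

lemma reduction_comp:
  assumes "reduction D E \<psi> \<beta>" "reduction E F \<phi> \<alpha>"
  shows "reduction D F (\<phi> \<circ> \<psi>) (\<alpha> \<circ> \<beta>)"
proof -
  have \<psi>: "\<psi> ` states D \<subseteq> states E" and \<beta>: "\<beta> ` parts D \<subseteq> parts E"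
    and ref_D: "\<And>\<pi>. \<pi> \<in> parts D \<Longrightarrow> refines (pullback (\<beta> \<pi>) \<psi> (states D)) \<pi>"
    using assms(1) unfolding reduction_def by auto
  have \<phi>: "\<phi> ` states E \<subseteq> states F" and \<alpha>: "\<alpha> ` parts E \<subseteq> parts F"
    and ref_E: "\<And>\<rho>. \<rho> \<in> parts E \<Longrightarrow> refines (pullback (\<alpha> \<rho>) \<phi> (states E)) \<rho>"
    using assms(2) unfolding reduction_def by auto
  have "refines (pullback ((\<alpha> \<circ> \<beta>) \<pi>) (\<phi> \<circ> \<psi>) (states D)) \<pi>" if "\<pi> \<in> parts D" for \<pi>
    using refines_pullback_comp[OF ref_E ref_D[OF that] \<psi>] \<beta> that by auto
  moreover have "(\<phi> \<circ> \<psi>) ` states D \<subseteq> states F" "(\<alpha> \<circ> \<beta>) ` parts D \<subseteq> parts F"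
    using \<psi> \<phi> \<beta> \<alpha> by (fastforce simp: image_subset_iff)+
  ultimately show ?thesis
    unfolding reduction_def by blast
qed

definition separates_states :: "'a asd \<Rightarrow> bool" where
  "separates_states D \<longleftrightarrow>
     (\<forall>x\<in>states D. \<forall>y\<in>states D. x \<noteq> y \<longrightarrow> (\<exists>\<pi>\<in>parts D. \<not> same_block \<pi> x y))"

lemma inj_on_reduction_states:
  assumes "reduction D E \<psi> \<beta>" "is_asd E" "separates_states D"
  shows "inj_on \<psi> (states D)"
proof (rule inj_onI, rule ccontr)
  fix x y assume xy: "x \<in> states D" "y \<in> states D" "\<psi> x = \<psi> y" "x \<noteq> y"
  then obtain \<pi> where \<pi>: "\<pi> \<in> parts D" "\<not> same_block \<pi> x y"
    using assms(3) unfolding separates_states_def by blast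
  have "\<beta> \<pi> \<in> parts E" "\<psi> x \<in> states E"
    using assms(1) \<pi>(1) xy(1) unfolding reduction_def by auto
  then have "\<psi> x \<in> \<Union> (\<beta> \<pi>)"
    using assms(2) unfolding is_asd_def partition_on_def by auto
  then have "same_block (\<beta> \<pi>) (\<psi> x) (\<psi> y)"
    using xy(3) unfolding same_block_def by auto
  moreover have "refines (pullback (\<beta> \<pi>) \<psi> (states D)) \<pi>"
    using assms(1) \<pi>(1) unfolding reduction_def by blast
  ultimately show False
    using same_block_if_same_block_pullback[OF _ xy(1,2)] \<pi>(2) by blast
qed

lemma card_states_le_reduction:
  assumes "reduction D E \<psi> \<beta>" "is_asd E" "separates_states D"
  shows "card (states D) \<le> card (states E)"
  using card_inj_on_le[OF inj_on_reduction_states[OF assms]] assms(1,2)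
  unfolding reduction_def is_asd_def by blast

lemma same_block_edge_partition:
  assumes "x \<in> V" "y \<in> V"
  shows "same_block (edge_partition V g) x y \<longleftrightarrow> (x = y \<and> x \<in> g) \<or> (x \<notin> g \<and> y \<notin> g)"
  using assms unfolding same_block_def edge_partition_def by auto

lemma partition_on_edge_partition:
  assumes "e \<subseteq> V" "e \<noteq> V"
  shows "partition_on V (edge_partition V e)"
  using assms unfolding partition_on_def disjoint_def edge_partition_def by auto

text \<open>An edge partition has only three blocks.\<close>

lemma edge_partition_not_four_separated:
  assumes "card g = 2" "a \<in> V" "b \<in> V" "c \<in> V" "d \<in> V"
    and "\<not> same_block (edge_partition V g) a b" "\<not> same_block (edge_partition V g) a c"
    "\<not> same_block (edge_partition V g) a d" "\<not> same_block (edge_partition V g) b c"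
    "\<not> same_block (edge_partition V g) b d" "\<not> same_block (edge_partition V g) c d"
  shows False
proof -
  obtain p q where "g = {p, q}"
    using assms(1) by (meson card_2_iff)
  then show False
    using assms(2-) by (auto simp: same_block_edge_partition)
qed

lemma graph_device_states: "states (graph_device V Ed) = V"
  and graph_device_parts: "parts (graph_device V Ed) = edge_partition V ` Ed"
  by (simp_all add: states_def parts_def graph_device_def)

lemma is_asd_graph_device:
  assumes "is_graph V Ed" "card V > 2"
  shows "is_asd (graph_device V Ed)"
proof -
  have "finite V" and edges: "\<And>e. e \<in> Ed \<Longrightarrow> e \<subseteq> V \<and> card e = 2"
    using assms(1) unfolding is_graph_def by auto
  moreover have "finite Ed"
    using \<open>finite V\<close> edges by (meson PowI finite_Pow_iff finite_subset subsetI)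
  moreover have "e \<noteq> V" if "e \<in> Ed" for e
    using edges[OF that] assms(2) by auto
  ultimately show ?thesis
    unfolding is_asd_def graph_device_states graph_device_parts
    using partition_on_edge_partition by blast
qed

lemma separates_states_graph_device:
  assumes "no_isolated V Ed"
  shows "separates_states (graph_device V Ed)"
  using assms unfolding separates_states_def no_isolated_def graph_device_states graph_device_parts
  by (auto simp: same_block_def edge_partition_def)

lemma edge_eq_if_pullback_refines_both:
  assumes "e \<subseteq> V" "f \<subseteq> V" "card e = 2" "card f = 2" "card g = 2" "card V \<ge> 4" "\<chi> ` V \<subseteq> V"
    and ref_e: "refines (pullback (edge_partition V g) \<chi> V) (edge_partition V e)"
    and ref_f: "refines (pullback (edge_partition V g) \<chi> V) (edge_partition V f)"
  shows "e = f"
proof (rule ccontr)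
  assume "e \<noteq> f"
  obtain u v where uv: "e = {u, v}" "u \<noteq> v"
    using assms(3) by (meson card_2_iff)
  have "\<not> f \<subseteq> e"
    using card_subset_eq[of e f] assms(3,4) \<open>e \<noteq> f\<close> uv(1) by auto
  then obtain w where w: "w \<in> f" "w \<notin> e"
    by blast
  have "card {u, v, w} \<le> 3"
    by (simp add: card_insert_le_m1)
  then have "\<not> V \<subseteq> {u, v, w}"
    using assms(6) card_mono[of "{u, v, w}" V] by auto
  then obtain z where z: "z \<in> V" "z \<notin> {u, v, w}"
    by blast
  have separated: "\<not> same_block (edge_partition V g) (\<chi> x) (\<chi> y)"
    if "x \<in> V" "y \<in> V" "x \<noteq> y" "x \<in> e \<or> x \<in> f" for x y
  proof
    assume "same_block (edge_partition V g) (\<chi> x) (\<chi> y)"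
    then have "same_block (edge_partition V e) x y" "same_block (edge_partition V f) x y"
      using same_block_if_same_block_pullback[OF ref_e that(1,2)]
        same_block_if_same_block_pullback[OF ref_f that(1,2)] by blast+
    then show False
      using that by (auto simp: same_block_edge_partition)
  qed
  show False
    by (rule edge_partition_not_four_separated[where g = g and V = V
          and a = "\<chi> u" and b = "\<chi> v" and c = "\<chi> w" and d = "\<chi> z"])
      (use assms(1,2,5,7) uv w z separated in \<open>auto\<close>)
qed

lemma inj_on_graph_device_self_reduction:
  assumes "is_graph V Ed" "card V \<ge> 4" "reduction (graph_device V Ed) (graph_device V Ed) \<chi> \<gamma>"
  shows "inj_on (\<gamma> \<circ> edge_partition V) Ed"
proof (rule inj_onI)
  fix e f assume ef: "e \<in> Ed" "f \<in> Ed" "(\<gamma> \<circ> edge_partition V) e = (\<gamma> \<circ> edge_partition V) f"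
  have \<chi>: "\<chi> ` V \<subseteq> V" and "\<gamma> (edge_partition V e) \<in> edge_partition V ` Ed"
    and ref: "\<And>\<pi>. \<pi> \<in> edge_partition V ` Ed \<Longrightarrow> refines (pullback (\<gamma> \<pi>) \<chi> V) \<pi>"
    using assms(3) ef(1) unfolding reduction_def graph_device_states graph_device_parts by auto
  then obtain g where g: "g \<in> Ed" "\<gamma> (edge_partition V e) = edge_partition V g"
    by blast
  show "e = f"
  proof (rule edge_eq_if_pullback_refines_both[OF _ _ _ _ _ assms(2) \<chi>])
    show "refines (pullback (edge_partition V g) \<chi> V) (edge_partition V e)"
      "refines (pullback (edge_partition V g) \<chi> V) (edge_partition V f)"
      using ref[of "edge_partition V e"] ref[of "edge_partition V f"] ef g(2) by auto
  qed (use assms(1) ef(1,2) g(1) in \<open>auto simp: is_graph_def\<close>)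
qed

theorem lemma2:
  fixes V :: "'a set" and Ed :: "'a set set"
  assumes "is_graph V Ed" and "card V \<ge> 4" and "no_isolated V Ed"
  shows "minimal TYPE('b) (graph_device V Ed)"
  unfolding minimal_def
proof (intro conjI allI impI)
  let ?D = "graph_device V Ed"
  show "is_asd ?D"
    using is_asd_graph_device[OF assms(1)] assms(2) by simp
  fix E :: "'b asd"
  assume E: "is_asd E \<and> asd_equiv E ?D"
  then obtain \<psi> \<beta> \<phi> \<alpha> where red: "reduction ?D E \<psi> \<beta>" "reduction E ?D \<phi> \<alpha>"
    unfolding asd_equiv_def asd_le_iff_reduction by blast
  show "card (states ?D) \<le> card (states E)"
    using card_states_le_reduction[OF red(1)] separates_states_graph_device[OF assms(3)] E
    by simp
  have "inj_on ((\<alpha> \<circ> \<beta>) \<circ> edge_partition V) Ed"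
    using inj_on_graph_device_self_reduction[OF assms(1,2) reduction_comp[OF red]] .
  then have "inj_on \<beta> (parts ?D)"
    unfolding graph_device_parts comp_assoc by (metis inj_on_imageI inj_on_imageI2)
  moreover have "\<beta> ` parts ?D \<subseteq> parts E" "finite (parts E)"
    using red(1) E unfolding reduction_def is_asd_def by simp_all
  ultimately show "card (parts ?D) \<le> card (parts E)"
    by (rule card_inj_on_le)
qed

end
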